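(* Let $T>0$, $0<\eta<T$, $0<\alpha<\frac{1}{\eta}$, let $f\in C([0,\infty),[0,\infty))$, and let $a\in C([0,T],[0,\infty))$ with $a(t_0)>0$ for some $t_0\in[0,T]$. Consider the boundary value problem \[ u''(t)+a(t)f(u(t))=0,\quad 0<t<T,\qquad u'(0)=0,\quad u(T)=\alpha\int_0^{\eta}u(s)\,ds. \tag{P} \] Assume: (a) there exist constants $\rho_2>0$ and $M_2\in[\Lambda_2,\infty)$ such that $f(u)\ge M_2\rho_2$ for all $u\in[\gamma\rho_2,\rho_2]$; (b) $f_0=\alpha_1\in[0,\theta_1\Lambda_1)$ for some $\theta_1\in(0,1]$; (c) $f_\infty=\beta_2\in[0,\theta_1\Lambda_1)$ for some $\theta_1\in(0,1]$. Then (P) has at least two positive solutions $u_1,u_2$ with \[ 0<\|u_1\|<\rho_2<\|u_2\|. \]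
   Context: $f_0=\lim_{u\to0^+}\frac{f(u)}{u}$, $f_\infty=\lim_{u\to\infty}\frac{f(u)}{u}$ (assumed to exist with the stated values). $\|u\|=\max_{t\in[0,T]}|u(t)|$. $\gamma=\dfrac{\alpha\eta(T-\eta)}{T-\alpha\eta^2}$, $\Lambda_1=\dfrac{1-\alpha\eta}{\int_0^T (T-s)a(s)\,ds}$, and $\Lambda_2=\dfrac{1-\alpha\eta}{\gamma\left(\int_\eta^T (T-s)a(s)\,ds+\frac12\int_0^\eta\left[2(T-\eta)+\alpha(\eta^2-s^2)\right]a(s)\,ds\right)}$. A positive solution of (P) is a function $u\in C^2([0,T])$ satisfying (P) with $u(t)\ge0$ on $[0,T]$ and $u$ not identically zero. *)

theory Defs
  imports "HOL-Analysis.Analysis"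
begin

definition gammaP :: "real \<Rightarrow> real \<Rightarrow> real \<Rightarrow> real" where
  "gammaP T \<alpha> \<eta> = \<alpha> * \<eta> * (T - \<eta>) / (T - \<alpha> * \<eta>^2)"

definition Lambda1 :: "real \<Rightarrow> real \<Rightarrow> real \<Rightarrow> (real \<Rightarrow> real) \<Rightarrow> real" where
  "Lambda1 T \<alpha> \<eta> a = (1 - \<alpha> * \<eta>) / integral {0..T} (\<lambda>s. (T - s) * a s)"

definition Lambda2 :: "real \<Rightarrow> real \<Rightarrow> real \<Rightarrow> (real \<Rightarrow> real) \<Rightarrow> real" where
  "Lambda2 T \<alpha> \<eta> a = (1 - \<alpha> * \<eta>) /
     (gammaP T \<alpha> \<eta> * (integral {\<eta>..T} (\<lambda>s. (T - s) * a s)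
        + (1/2) * integral {0..\<eta>} (\<lambda>s. (2 * (T - \<eta>) + \<alpha> * (\<eta>^2 - s^2)) * a s)))"

definition supnorm :: "real \<Rightarrow> (real \<Rightarrow> real) \<Rightarrow> real" where
  "supnorm T u = Sup ((\<lambda>t. \<bar>u t\<bar>) ` {0..T})"

definition C2_on :: "real \<Rightarrow> (real \<Rightarrow> real) \<Rightarrow> (real \<Rightarrow> real) \<Rightarrow> (real \<Rightarrow> real) \<Rightarrow> bool" where
  "C2_on T u u' u'' \<longleftrightarrow>
     (\<forall>t\<in>{0..T}. (u has_real_derivative u' t) (at t within {0..T})
                 \<and> (u' has_real_derivative u'' t) (at t within {0..T}))
     \<and> continuous_on {0..T} u''"

definition positive_solution ::
  "real \<Rightarrow> real \<Rightarrow> real \<Rightarrow> (real \<Rightarrow> real) \<Rightarrow> (real \<Rightarrow> real) \<Rightarrow> (real \<Rightarrow> real) \<Rightarrow> bool" where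
  "positive_solution T \<eta> \<alpha> a f u \<longleftrightarrow>
     (\<exists>u' u''. C2_on T u u' u''
        \<and> (\<forall>t\<in>{0<..<T}. u'' t + a t * f (u t) = 0)
        \<and> u' 0 = 0
        \<and> u T = \<alpha> * integral {0..\<eta>} u)
     \<and> (\<forall>t\<in>{0..T}. u t \<ge> 0)
     \<and> (\<exists>t\<in>{0..T}. u t \<noteq> 0)"

end

theory Submission
  imports Defs "HOL-Complex_Analysis.Great_Picard"
begin

(* With G h t = \<integral>\<^sub>0\<^sup>t (t - s) h(s) ds, a positive solution of (P) is the same as a continuous
   u = c - G (a \<cdot> f(u)) with c = u 0 = \<parallel>u\<parallel> that satisfies one scalar equation
   c (1 - \<alpha>\<eta>) = B (a \<cdot> f(u)), B linear, expressing the nonlocal boundary condition. Every such u satisfies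
   \<gamma> c \<le> u \<le> c, so the scalar equation cannot hold at a level c where f is too small on [0, c]
   (this happens for c near 0 and near \<infinity> by (b) and (c)) nor where f is too large on [\<gamma> c, c]
   (this happens at \<rho>2 by (a)). Between two such levels of opposite kind there is a solution:
   the initial value problem need not be uniquely solvable for merely continuous f, so one shoots
   with an explicit discretisation, which depends continuously on c, obtains a zero of the
   boundary defect by the intermediate value theorem, and passes to the limit by Arzela-Ascoli. *)

lemma integrable_continuous_subinterval:
  fixes g :: "real \<Rightarrow> real"
  assumes "continuous_on {a..b} g" "{c..d} \<subseteq> {a..b}"
  shows "g integrable_on {c..d}"
  using assms integrable_continuous_interval integrable_subinterval_real by blast

definition second_primitive :: "(real \<Rightarrow> real) \<Rightarrow> real \<Rightarrow> real" where
  "second_primitive g t = integral {0..t} (\<lambda>s. (t - s) * g s)"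

lemma second_primitive_0 [simp]: "second_primitive g 0 = 0"
  by (simp add: second_primitive_def)

lemma second_primitive_eq:
  assumes g: "continuous_on {0..T} g" and t: "t \<in> {0..T}"
  shows "second_primitive g t = t * integral {0..t} g - integral {0..t} (\<lambda>s. s * g s)"
proof -
  have int: "h integrable_on {0..t}" if "continuous_on {0..T} h" for h :: "real \<Rightarrow> real"
    using t by (intro integrable_continuous_subinterval[OF that]) auto
  show ?thesis
    unfolding second_primitive_def left_diff_distrib
    by (subst integral_diff) (auto intro!: int continuous_intros g)
qed

lemma has_real_derivative_second_primitive:
  assumes g: "continuous_on {0..T} g" and t: "t \<in> {0..T}"
  shows "(second_primitive g has_real_derivative integral {0..t} g) (at t within {0..T})"
proof -
  have sg: "continuous_on {0..T} (\<lambda>s. s * g s)" by (intro continuous_intros g)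
  have "((\<lambda>x. x * integral {0..x} g - integral {0..x} (\<lambda>s. s * g s)) has_real_derivative
        1 * integral {0..t} g + g t * t - t * g t) (at t within {0..T})"
    by (intro DERIV_diff DERIV_mult DERIV_ident integral_has_real_derivative g sg t)
  then show ?thesis
    unfolding mult_1 mult.commute[of "g t"] add_diff_cancel
    by (rule has_field_derivative_transform_within[where d=1]) (use t second_primitive_eq[OF g] in auto)
qed

lemma continuous_on_second_primitive:
  "continuous_on {0..T} g \<Longrightarrow> continuous_on {0..T} (second_primitive g)"
  by (meson DERIV_continuous continuous_on_eq_continuous_within has_real_derivative_second_primitive)

lemma second_primitive_nonneg:
  assumes "\<And>s. s \<in> {0..t} \<Longrightarrow> g s \<ge> 0"
  shows "second_primitive g t \<ge> 0"
proof (cases "(\<lambda>s. (t - s) * g s) integrable_on {0..t}")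
  case True
  then show ?thesis
    unfolding second_primitive_def by (rule integral_nonneg) (use assms in auto)
qed (simp add: second_primitive_def not_integrable_integral)

lemma second_primitive_increment:
  assumes g: "continuous_on {0..T} g" and tt: "0 \<le> t" "t \<le> t'" "t' \<le> T"
  shows "((\<lambda>x. integral {0..x} g) has_integral second_primitive g t' - second_primitive g t) {t..t'}"
proof (rule fundamental_theorem_of_calculus[OF tt(2)])
  fix x assume x: "x \<in> {t..t'}"
  have "(second_primitive g has_real_derivative integral {0..x} g) (at x within {0..T})"
    using x tt by (intro has_real_derivative_second_primitive[OF g]) auto
  then show "(second_primitive g has_vector_derivative integral {0..x} g) (at x within {t..t'})"
    unfolding has_real_derivative_iff_has_vector_derivative[symmetric]
    by (rule DERIV_subset) (use tt in auto)
qed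

lemma integral_upper_limit_mono:
  fixes g :: "real \<Rightarrow> real"
  assumes g: "continuous_on {0..T} g" and gn: "\<And>s. s \<in> {0..T} \<Longrightarrow> g s \<ge> 0"
    and xy: "0 \<le> x" "x \<le> y" "y \<le> T"
  shows "integral {0..x} g \<le> integral {0..y} g"
  using xy gn by (intro integral_subset_le integrable_continuous_subinterval[OF g]) auto

context
  fixes g :: "real \<Rightarrow> real" and T :: real
  assumes g: "continuous_on {0..T} g" and gn: "\<And>s. s \<in> {0..T} \<Longrightarrow> g s \<ge> 0"
begin

lemma second_primitive_increment_bounds:
  assumes tt: "0 \<le> t" "t \<le> t'" "t' \<le> T"
  shows "(t' - t) * integral {0..t} g \<le> second_primitive g t' - second_primitive g t"
    and "second_primitive g t' - second_primitive g t \<le> (t' - t) * integral {0..t'} g"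
proof -
  note inc = second_primitive_increment[OF g tt]
  have "integral {t..t'} (\<lambda>x. integral {0..t} g) \<le> integral {t..t'} (\<lambda>x. integral {0..x} g)"
    using inc tt by (intro integral_le integral_upper_limit_mono[OF g gn]) auto
  then show "(t' - t) * integral {0..t} g \<le> second_primitive g t' - second_primitive g t"
    using tt inc by (simp add: integral_unique)
  have "integral {t..t'} (\<lambda>x. integral {0..x} g) \<le> integral {t..t'} (\<lambda>x. integral {0..t'} g)"
    using inc tt by (intro integral_le integral_upper_limit_mono[OF g gn]) auto
  then show "second_primitive g t' - second_primitive g t \<le> (t' - t) * integral {0..t'} g"
    using tt inc by (simp add: integral_unique)
qed

lemma second_primitive_mono:
  assumes "0 \<le> t" "t \<le> t'" "t' \<le> T"
  shows "second_primitive g t \<le> second_primitive g t'"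
proof -
  have "0 \<le> (t' - t) * integral {0..t} g"
    using assms gn by (intro mult_nonneg_nonneg integral_nonneg integrable_continuous_subinterval[OF g]) auto
  then show ?thesis using second_primitive_increment_bounds(1)[OF assms] by linarith
qed

lemma second_primitive_lipschitz:
  assumes "0 \<le> t" "t \<le> t'" "t' \<le> T"
  shows "second_primitive g t' - second_primitive g t \<le> integral {0..T} g * (t' - t)"
proof -
  have "(t' - t) * integral {0..t'} g \<le> (t' - t) * integral {0..T} g"
    using assms by (intro mult_left_mono integral_upper_limit_mono[OF g gn]) auto
  then show ?thesis using second_primitive_increment_bounds(2)[OF assms] by (simp add: mult.commute)
qed

text \<open>\<open>second_primitive g\<close> is convex and vanishes at 0, so its chord slopes from 0 increase.\<close>
lemma second_primitive_ratio:
  assumes "0 \<le> \<eta>" "\<eta> \<le> T"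
  shows "T * second_primitive g \<eta> \<le> \<eta> * second_primitive g T"
proof -
  define P where "P = integral {0..\<eta>} g"
  have up: "second_primitive g \<eta> \<le> \<eta> * P"
    using second_primitive_increment_bounds(2)[of 0 \<eta>] assms unfolding P_def by simp
  have low: "(T - \<eta>) * P \<le> second_primitive g T - second_primitive g \<eta>"
    using second_primitive_increment_bounds(1)[of \<eta> T] assms unfolding P_def by simp
  have "(T - \<eta>) * second_primitive g \<eta> \<le> (T - \<eta>) * (\<eta> * P)"
    using up assms by (intro mult_left_mono) auto
  also have "\<dots> = \<eta> * ((T - \<eta>) * P)" by simp
  also have "\<dots> \<le> \<eta> * (second_primitive g T - second_primitive g \<eta>)"
    using low assms by (intro mult_left_mono) auto
  finally show ?thesis by (simp add: algebra_simps)
qed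

end

lemma second_primitive_split:
  assumes g: "continuous_on {0..T} g" and eta: "0 \<le> \<eta>" "\<eta> \<le> T"
  shows "second_primitive g T
    = integral {0..\<eta>} (\<lambda>s. (T - s) * g s) + integral {\<eta>..T} (\<lambda>s. (T - s) * g s)"
  unfolding second_primitive_def using eta
  by (intro Henstock_Kurzweil_Integration.integral_combine[symmetric]
      integrable_continuous_subinterval[of 0 T] continuous_intros g) auto

lemma second_primitive_le:
  assumes g: "continuous_on {0..T} g" and h: "continuous_on {0..T} h"
    and gh: "\<And>s. s \<in> {0..T} \<Longrightarrow> g s \<le> h s" and t: "t \<in> {0..T}"
  shows "second_primitive g t \<le> second_primitive h t"
  unfolding second_primitive_def
proof (rule integral_le)
  show "(\<lambda>s. (t - s) * g s) integrable_on {0..t}" "(\<lambda>s. (t - s) * h s) integrable_on {0..t}"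
    using t by (auto intro!: integrable_continuous_subinterval[of 0 T] continuous_intros g h)
qed (use t gh in \<open>auto intro!: mult_left_mono\<close>)

lemma second_primitive_cmult: "second_primitive (\<lambda>s. c * g s) t = c * second_primitive g t"
  unfolding second_primitive_def integral_mult_right[symmetric] by (simp add: mult.left_commute)

lemma integral_second_primitive:
  assumes g: "continuous_on {0..T} g" and eta: "0 \<le> \<eta>" "\<eta> \<le> T"
  shows "integral {0..\<eta>} (second_primitive g) = integral {0..\<eta>} (\<lambda>s. (\<eta> - s)\<^sup>2 / 2 * g s)"
proof -
  have ge: "continuous_on {0..\<eta>} g" using g eta by (auto elim: continuous_on_subset)
  define H where "H k x = integral {0..x} (\<lambda>s. s ^ k * g s)" for k :: nat and x
  define Q where "Q x = x\<^sup>2 / 2 * H 0 x - x * H 1 x + H 2 x / 2" for x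
  have int: "(\<lambda>s. s ^ k * g s) integrable_on {0..\<eta>}" for k
    by (intro integrable_continuous_interval continuous_intros ge)
  have dH: "(H k has_real_derivative x ^ k * g x) (at x within {0..\<eta>})" if "x \<in> {0..\<eta>}" for k x
    unfolding H_def by (intro integral_has_real_derivative continuous_intros ge that)
  have dQ: "(Q has_vector_derivative second_primitive g x) (at x within {0..\<eta>})"
    if x: "x \<in> {0..\<eta>}" for x
  proof -
    have "(Q has_real_derivative x * H 0 x - H 1 x) (at x within {0..\<eta>})"
    proof -
      have sq: "((\<lambda>x. x\<^sup>2 / 2) has_real_derivative x) (at x within {0..\<eta>})"
        by (auto intro!: derivative_eq_intros)
      have "(Q has_real_derivative x * H 0 x + x ^ 0 * g x * (x\<^sup>2 / 2)
          - (1 * H 1 x + x ^ 1 * g x * x) + x ^ 2 * g x / 2) (at x within {0..\<eta>})"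
        unfolding Q_def
        using DERIV_add[OF DERIV_diff[OF DERIV_mult[OF sq dH[OF x, of 0]]
            DERIV_mult[OF DERIV_ident dH[OF x, of 1]]] DERIV_cdivide[OF dH[OF x, of 2], of 2]] by simp
      then show ?thesis by (simp add: power2_eq_square algebra_simps)
    qed
    moreover have "x * H 0 x - H 1 x = second_primitive g x"
      using second_primitive_eq[OF g, of x] x eta by (simp add: H_def)
    ultimately show ?thesis by (simp add: has_real_derivative_iff_has_vector_derivative)
  qed
  have "((\<lambda>s. \<eta>\<^sup>2 / 2 * (s ^ 0 * g s) - \<eta> * (s ^ 1 * g s) + s ^ 2 * g s / 2)
      has_integral Q \<eta>) {0..\<eta>}"
    unfolding Q_def H_def
    by (intro has_integral_add has_integral_diff has_integral_mult_right has_integral_divide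
        integrable_integral int)
  moreover have "(\<lambda>s. \<eta>\<^sup>2 / 2 * (s ^ 0 * g s) - \<eta> * (s ^ 1 * g s) + s ^ 2 * g s / 2)
      = (\<lambda>s. (\<eta> - s)\<^sup>2 / 2 * g s)"
    by (simp add: fun_eq_iff power2_eq_square field_simps)
  moreover have "integral {0..\<eta>} (second_primitive g) = Q \<eta>"
    using fundamental_theorem_of_calculus[OF eta(1) dQ] by (simp add: Q_def H_def integral_unique)
  ultimately show ?thesis by (metis integral_unique)
qed

text \<open>For \<open>u = c - second_primitive h\<close>, the nonlocal condition \<open>u T = \<alpha> * integral {0..\<eta>} u\<close>
  reads \<open>c * (1 - \<alpha> * \<eta>) = bc_functional T \<alpha> \<eta> h\<close>.\<close>
definition bc_functional :: "real \<Rightarrow> real \<Rightarrow> real \<Rightarrow> (real \<Rightarrow> real) \<Rightarrow> real" where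
  "bc_functional T \<alpha> \<eta> g = second_primitive g T - \<alpha> * integral {0..\<eta>} (second_primitive g)"

definition Lambda2_denom :: "real \<Rightarrow> real \<Rightarrow> real \<Rightarrow> (real \<Rightarrow> real) \<Rightarrow> real" where
  "Lambda2_denom T \<alpha> \<eta> a = integral {\<eta>..T} (\<lambda>s. (T - s) * a s)
     + (1/2) * integral {0..\<eta>} (\<lambda>s. (2 * (T - \<eta>) + \<alpha> * (\<eta>\<^sup>2 - s\<^sup>2)) * a s)"

lemma Lambda1_eq: "Lambda1 T \<alpha> \<eta> a = (1 - \<alpha> * \<eta>) / second_primitive a T"
  by (simp add: Lambda1_def second_primitive_def)

lemma Lambda2_eq: "Lambda2 T \<alpha> \<eta> a = (1 - \<alpha> * \<eta>) / (gammaP T \<alpha> \<eta> * Lambda2_denom T \<alpha> \<eta> a)"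
  by (simp add: Lambda2_def Lambda2_denom_def)

lemma Lambda2_denom_pos:
  assumes a: "continuous_on {0..T} a" and an: "\<And>s. s \<in> {0..T} \<Longrightarrow> 0 \<le> a s"
    and eta: "0 < \<eta>" "\<eta> < T" and al: "0 \<le> \<alpha>" and pos: "0 < second_primitive a T"
  shows "0 < Lambda2_denom T \<alpha> \<eta> a"
proof -
  define q where "q = (T - \<eta>) / T"
  have q: "0 < q" "q \<le> 1" using eta by (auto simp: q_def field_simps)
  note int = integrable_continuous_subinterval[of 0 T]
  have "integral {0..\<eta>} (\<lambda>s. q * ((T - s) * a s))
      \<le> integral {0..\<eta>} (\<lambda>s. 1/2 * ((2 * (T - \<eta>) + \<alpha> * (\<eta>\<^sup>2 - s\<^sup>2)) * a s))"
  proof (rule integral_le)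
    fix s assume s: "s \<in> {0..\<eta>}"
    have "q * (T - s) \<le> T - \<eta>"
      using s eta mult_right_mono[of \<eta> T s] unfolding q_def by (auto simp: field_simps)
    also have "\<dots> \<le> 1/2 * (2 * (T - \<eta>) + \<alpha> * (\<eta>\<^sup>2 - s\<^sup>2))"
      using s al by (auto intro!: mult_nonneg_nonneg power_mono)
    finally have "q * (T - s) * a s \<le> 1/2 * (2 * (T - \<eta>) + \<alpha> * (\<eta>\<^sup>2 - s\<^sup>2)) * a s"
      using an[of s] s eta by (intro mult_right_mono) auto
    then show "q * ((T - s) * a s) \<le> 1/2 * ((2 * (T - \<eta>) + \<alpha> * (\<eta>\<^sup>2 - s\<^sup>2)) * a s)"
      by (simp add: mult.assoc)
  qed (use eta in \<open>auto intro!: int continuous_intros a\<close>)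
  moreover have "q * integral {\<eta>..T} (\<lambda>s. (T - s) * a s) \<le> integral {\<eta>..T} (\<lambda>s. (T - s) * a s)"
    using q an eta
    by (intro mult_left_le_one_le integral_nonneg int continuous_intros a) auto
  ultimately have "q * second_primitive a T \<le> Lambda2_denom T \<alpha> \<eta> a"
    unfolding second_primitive_split[OF a less_imp_le[OF eta(1)] less_imp_le[OF eta(2)]]
      Lambda2_denom_def by (simp add: distrib_left)
  moreover have "0 < q * second_primitive a T" using q pos by simp
  ultimately show ?thesis by linarith
qed

lemma bc_functional_kernel:
  assumes g: "continuous_on {0..T} g" and eta: "0 \<le> \<eta>" "\<eta> \<le> T"
  shows "bc_functional T \<alpha> \<eta> g = integral {\<eta>..T} (\<lambda>s. (T - s) * g s)
      + integral {0..\<eta>} (\<lambda>s. ((T - s) - \<alpha> * (\<eta> - s)\<^sup>2 / 2) * g s)"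
proof -
  note int = integrable_continuous_subinterval[of 0 T]
  have "integral {0..\<eta>} (\<lambda>s. ((T - s) - \<alpha> * (\<eta> - s)\<^sup>2 / 2) * g s)
      = integral {0..\<eta>} (\<lambda>s. (T - s) * g s) - \<alpha> * integral {0..\<eta>} (\<lambda>s. (\<eta> - s)\<^sup>2 / 2 * g s)"
  proof -
    have "(\<lambda>s. ((T - s) - \<alpha> * (\<eta> - s)\<^sup>2 / 2) * g s)
        = (\<lambda>s. (T - s) * g s - \<alpha> * ((\<eta> - s)\<^sup>2 / 2 * g s))"
      by (simp add: fun_eq_iff algebra_simps)
    then show ?thesis
      using eta by (simp add: integral_diff int continuous_intros g)
  qed
  then show ?thesis
    unfolding bc_functional_def integral_second_primitive[OF g eta] second_primitive_split[OF g eta]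
    by simp
qed

context
  fixes T \<alpha> \<eta> :: real and g :: "real \<Rightarrow> real"
  assumes g: "continuous_on {0..T} g" and gn: "\<And>s. s \<in> {0..T} \<Longrightarrow> g s \<ge> 0"
    and eta: "0 \<le> \<eta>" "\<eta> \<le> T" and al: "\<alpha> \<ge> 0"
begin

lemma bc_functional_le:
  assumes a: "continuous_on {0..T} a" and ga: "\<And>s. s \<in> {0..T} \<Longrightarrow> g s \<le> K * a s"
  shows "bc_functional T \<alpha> \<eta> g \<le> K * second_primitive a T"
proof -
  have "integral {0..\<eta>} (second_primitive g) \<ge> 0"
    using eta gn
    by (intro integral_nonneg integrable_continuous_subinterval[OF continuous_on_second_primitive[OF g]]
        second_primitive_nonneg) auto
  then have "bc_functional T \<alpha> \<eta> g \<le> second_primitive g T"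
    unfolding bc_functional_def using al by (simp add: mult_nonneg_nonneg)
  also have "\<dots> \<le> second_primitive (\<lambda>s. K * a s) T"
    using eta by (intro second_primitive_le[OF g] ga) (auto intro!: continuous_intros a)
  finally show ?thesis by (simp add: second_primitive_cmult)
qed

lemma bc_functional_ge_Lambda2_denom:
  assumes a: "continuous_on {0..T} a" and an: "\<And>s. s \<in> {0..T} \<Longrightarrow> a s \<ge> 0"
    and K: "K \<ge> 0" and ga: "\<And>s. s \<in> {0..T} \<Longrightarrow> K * a s \<le> g s" and al1: "\<alpha> * \<eta> \<le> 1"
  shows "K * Lambda2_denom T \<alpha> \<eta> a \<le> bc_functional T \<alpha> \<eta> g"
proof -
  note int = integrable_continuous_subinterval[of 0 T]
  have "integral {\<eta>..T} (\<lambda>s. K * ((T - s) * a s)) \<le> integral {\<eta>..T} (\<lambda>s. (T - s) * g s)"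
  proof (rule integral_le)
    fix x assume x: "x \<in> {\<eta>..T}"
    have "(T - x) * (K * a x) \<le> (T - x) * g x" using ga[of x] x eta by (intro mult_left_mono) auto
    then show "K * ((T - x) * a x) \<le> (T - x) * g x" by (simp add: algebra_simps)
  qed (use eta in \<open>auto intro!: int continuous_intros a g\<close>)
  moreover have "integral {0..\<eta>} (\<lambda>s. K * (1/2 * ((2 * (T - \<eta>) + \<alpha> * (\<eta>\<^sup>2 - s\<^sup>2)) * a s)))
      \<le> integral {0..\<eta>} (\<lambda>s. ((T - s) - \<alpha> * (\<eta> - s)\<^sup>2 / 2) * g s)"
  proof (rule integral_le)
    fix x assume x: "x \<in> {0..\<eta>}"
    define w where "w = (2 * (T - \<eta>) + \<alpha> * (\<eta>\<^sup>2 - x\<^sup>2)) / 2"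
    have w: "w \<ge> 0"
      unfolding w_def using x eta al by (auto intro!: mult_nonneg_nonneg simp: power_mono)
    have split: "(T - x) - \<alpha> * (\<eta> - x)\<^sup>2 / 2 = w + (\<eta> - x) * (1 - \<alpha> * \<eta>)"
      unfolding w_def by (simp add: power2_eq_square field_simps)
    have "w * (K * a x) \<le> w * g x" using w ga[of x] x eta by (intro mult_left_mono) auto
    also have "\<dots> \<le> (w + (\<eta> - x) * (1 - \<alpha> * \<eta>)) * g x"
      using x al1 gn[of x] eta by (intro mult_right_mono) auto
    finally have bound: "w * (K * a x) \<le> ((T - x) - \<alpha> * (\<eta> - x)\<^sup>2 / 2) * g x"
      unfolding split .
    have eq: "K * (1/2 * ((2 * (T - \<eta>) + \<alpha> * (\<eta>\<^sup>2 - x\<^sup>2)) * a x)) = w * (K * a x)"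
      unfolding w_def by (simp add: field_simps)
    show "K * (1/2 * ((2 * (T - \<eta>) + \<alpha> * (\<eta>\<^sup>2 - x\<^sup>2)) * a x))
        \<le> ((T - x) - \<alpha> * (\<eta> - x)\<^sup>2 / 2) * g x"
      unfolding eq by (rule bound)
  qed (use eta in \<open>auto intro!: int continuous_intros a g\<close>)
  ultimately show ?thesis
    unfolding bc_functional_kernel[OF g eta] Lambda2_denom_def integral_mult_right distrib_left
    by linarith
qed

lemma bc_functional_ge_scaled:
  assumes T: "T > 0"
  shows "second_primitive g T * (1 - \<alpha> * \<eta>\<^sup>2 / T) \<le> bc_functional T \<alpha> \<eta> g"
proof -
  have "integral {0..\<eta>} (second_primitive g) \<le> integral {0..\<eta>} (\<lambda>x. second_primitive g \<eta>)"
    using eta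
    by (intro integral_le integrable_continuous_subinterval[OF continuous_on_second_primitive[OF g]]
        second_primitive_mono[OF g gn]) auto
  also have "\<dots> \<le> \<eta> * (\<eta> * second_primitive g T / T)"
    using mult_left_mono[OF second_primitive_ratio[OF g gn eta] eta(1)] T eta
    by (simp add: field_simps)
  finally have "\<alpha> * integral {0..\<eta>} (second_primitive g) \<le> \<alpha> * (\<eta> * (\<eta> * second_primitive g T / T))"
    using al by (rule mult_left_mono)
  then show ?thesis unfolding bc_functional_def using T by (simp add: field_simps power2_eq_square)
qed

end

lemma gammaP_bounds:
  assumes "0 < \<eta>" "\<eta> < T" "0 < \<alpha>" "\<alpha> * \<eta> < 1"
  shows "0 < gammaP T \<alpha> \<eta>" "gammaP T \<alpha> \<eta> < 1"
    and "(1 - gammaP T \<alpha> \<eta>) * (1 - \<alpha> * \<eta>\<^sup>2 / T) = 1 - \<alpha> * \<eta>"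
proof -
  have "\<alpha> * \<eta>\<^sup>2 < \<eta>" using assms by (simp add: power2_eq_square mult.assoc[symmetric])
  then have D: "T - \<alpha> * \<eta>\<^sup>2 > 0" using assms by simp
  then show "0 < gammaP T \<alpha> \<eta>" unfolding gammaP_def using assms by simp
  have "\<alpha> * \<eta> * T < T" using assms by simp
  then show "gammaP T \<alpha> \<eta> < 1" unfolding gammaP_def using D by (simp add: power2_eq_square algebra_simps)
  show "(1 - gammaP T \<alpha> \<eta>) * (1 - \<alpha> * \<eta>\<^sup>2 / T) = 1 - \<alpha> * \<eta>"
    unfolding gammaP_def using D assms by (simp add: field_simps power2_eq_square)
qed

definition hat :: "real \<Rightarrow> real" where
  "hat x = max 0 (1 - \<bar>x\<bar>)"

lemma continuous_on_hat [continuous_intros]: "continuous_on S g \<Longrightarrow> continuous_on S (\<lambda>x. hat (g x))"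
  unfolding hat_def by (intro continuous_intros)

lemma hat_nonneg: "hat x \<ge> 0"
  by (simp add: hat_def)

lemma hat_eq_0: "\<bar>x\<bar> \<ge> 1 \<Longrightarrow> hat x = 0"
  by (simp add: hat_def)

lemma hat_neq_0_imp: "hat x \<noteq> 0 \<Longrightarrow> \<bar>x\<bar> < 1"
  by (auto simp: hat_def split: if_splits)

lemma sum_hat_eq_1:
  fixes x :: real
  shows "0 \<le> x \<Longrightarrow> x \<le> real M \<Longrightarrow> (\<Sum>i\<le>M. hat (x - real i)) = 1"
proof (induction M)
  case 0
  then show ?case by (simp add: hat_def)
next
  case (Suc M)
  show ?case
  proof (cases "x \<le> real M")
    case True
    then show ?thesis using Suc by (simp add: hat_eq_0)
  next
    case False
    then have "(\<Sum>i<M. hat (x - real i)) = 0" by (intro sum.neutral) (auto intro!: hat_eq_0)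
    then show ?thesis using False Suc.prems by (simp add: lessThan_Suc_atMost[symmetric] hat_def)
  qed
qed

lemma hat_combination_ge:
  assumes x: "0 \<le> x" "x \<le> real M" and v: "\<And>i. i \<le> M \<Longrightarrow> hat (x - real i) \<noteq> 0 \<Longrightarrow> lo \<le> v i"
  shows "lo \<le> (\<Sum>i\<le>M. v i * hat (x - real i))"
proof -
  have "(\<Sum>i\<le>M. v i * hat (x - real i)) - lo = (\<Sum>i\<le>M. (v i - lo) * hat (x - real i))"
    using sum_hat_eq_1[OF x] by (simp add: left_diff_distrib sum_subtractf sum_distrib_left[symmetric])
  also have "\<dots> \<ge> 0"
  proof (rule sum_nonneg)
    fix i assume "i \<in> {..M}"
    then show "0 \<le> (v i - lo) * hat (x - real i)"
      using v[of i] hat_nonneg[of "x - real i"] by (cases "hat (x - real i) = 0") auto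
  qed
  finally show ?thesis by simp
qed

lemma hat_combination_le:
  assumes x: "0 \<le> x" "x \<le> real M" and v: "\<And>i. i \<le> M \<Longrightarrow> hat (x - real i) \<noteq> 0 \<Longrightarrow> v i \<le> hi"
  shows "(\<Sum>i\<le>M. v i * hat (x - real i)) \<le> hi"
  using hat_combination_ge[OF x, of "- hi" "\<lambda>i. - v i"] v by (simp add: sum_negf)

lemma second_primitive_sum:
  fixes g :: "'i \<Rightarrow> real \<Rightarrow> real"
  assumes I: "finite I" and g: "\<And>i. i \<in> I \<Longrightarrow> continuous_on {0..T} (g i)" and t: "t \<in> {0..T}"
  shows "second_primitive (\<lambda>s. \<Sum>i\<in>I. c i * g i s) t = (\<Sum>i\<in>I. c i * second_primitive (g i) t)"
proof -
  have int: "(\<lambda>s. c i * ((t - s) * g i s)) integrable_on {0..t}" if "i \<in> I" for i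
    using t by (intro integrable_continuous_subinterval[of 0 T] continuous_intros g that) auto
  have "second_primitive (\<lambda>s. \<Sum>i\<in>I. c i * g i s) t
      = integral {0..t} (\<lambda>s. \<Sum>i\<in>I. c i * ((t - s) * g i s))"
    unfolding second_primitive_def by (simp add: sum_distrib_left algebra_simps)
  also have "\<dots> = (\<Sum>i\<in>I. c i * second_primitive (g i) t)"
    unfolding second_primitive_def by (simp add: integral_sum[OF I int])
  finally show ?thesis .
qed

lemma bc_functional_sum:
  fixes g :: "'i \<Rightarrow> real \<Rightarrow> real"
  assumes I: "finite I" and g: "\<And>i. i \<in> I \<Longrightarrow> continuous_on {0..T} (g i)"
    and eta: "0 \<le> \<eta>" "\<eta> \<le> T"
  shows "bc_functional T \<alpha> \<eta> (\<lambda>s. \<Sum>i\<in>I. c i * g i s) = (\<Sum>i\<in>I. c i * bc_functional T \<alpha> \<eta> (g i))"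
proof -
  have "integral {0..\<eta>} (second_primitive (\<lambda>s. \<Sum>i\<in>I. c i * g i s))
      = integral {0..\<eta>} (\<lambda>t. \<Sum>i\<in>I. c i * second_primitive (g i) t)"
    using eta by (intro integral_cong second_primitive_sum[OF I g]) auto
  also have "\<dots> = (\<Sum>i\<in>I. c i * integral {0..\<eta>} (second_primitive (g i)))"
    using eta
    by (subst integral_sum[OF I])
      (auto intro!: integrable_continuous_subinterval[of 0 T] continuous_intros
        continuous_on_second_primitive g)
  finally show ?thesis
    unfolding bc_functional_def using eta
    by (simp add: second_primitive_sum[OF I g] sum_subtractf sum_distrib_left algebra_simps)
qed

text \<open>The node \<open>i\<close> carries the value \<open>v (i - 1)\<close> (and node 0 the value \<open>v 0\<close>): this lag makes the
  discretisation below an explicit recursion.\<close>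
definition lagged_interpolant :: "real \<Rightarrow> nat \<Rightarrow> (nat \<Rightarrow> real) \<Rightarrow> real \<Rightarrow> real" where
  "lagged_interpolant T N v s = (\<Sum>i\<le>N. v (i - 1) * hat (s * (real N / T) - real i))"

lemma continuous_on_lagged_interpolant [continuous_intros]:
  "continuous_on S (lagged_interpolant T N v)"
  unfolding lagged_interpolant_def by (intro continuous_intros)

lemma grid_point: "0 < T \<Longrightarrow> 0 < N \<Longrightarrow> j \<le> N \<Longrightarrow> real j * T / real N \<in> {0..T}"
  by (auto simp: field_simps)

context
  fixes T :: real and N :: nat and s :: real
  assumes T: "T > 0" and N: "N > 0" and s: "s \<in> {0..T}"
begin

lemma lagged_interpolant_node_near:
  assumes "hat (s * (real N / T) - real i) \<noteq> 0"
  shows "\<bar>real (i - 1) * T / real N - s\<bar> < 2 * T / real N"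
proof -
  have "\<bar>real (i - 1) - s * (real N / T)\<bar> < 2"
    using hat_neq_0_imp[OF assms] by (cases i) auto
  then have "\<bar>real (i - 1) - s * (real N / T)\<bar> * (T / real N) < 2 * (T / real N)"
    using T N by (intro mult_strict_right_mono) auto
  moreover have "\<bar>real (i - 1) - s * (real N / T)\<bar> * (T / real N) = \<bar>real (i - 1) * T / real N - s\<bar>"
    using T N by (simp add: abs_mult[symmetric] field_simps)
  ultimately show ?thesis by simp
qed

lemma lagged_interpolant_node_range: "0 \<le> s * (real N / T)" "s * (real N / T) \<le> real N"
  using s T by (auto simp: field_simps intro!: mult_right_mono)

lemma lagged_interpolant_ge:
  assumes "\<And>j. j \<le> N \<Longrightarrow> \<bar>real j * T / real N - s\<bar> < 2 * T / real N \<Longrightarrow> lo \<le> v j"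
  shows "lo \<le> lagged_interpolant T N v s"
  unfolding lagged_interpolant_def
  using lagged_interpolant_node_range lagged_interpolant_node_near assms
  by (intro hat_combination_ge) auto

lemma lagged_interpolant_le:
  assumes "\<And>j. j \<le> N \<Longrightarrow> \<bar>real j * T / real N - s\<bar> < 2 * T / real N \<Longrightarrow> v j \<le> hi"
  shows "lagged_interpolant T N v s \<le> hi"
  unfolding lagged_interpolant_def
  using lagged_interpolant_node_range lagged_interpolant_node_near assms
  by (intro hat_combination_le) auto

end

lemma second_primitive_tendsto:
  assumes h: "\<And>n. continuous_on {0..T} (h n)" and b: "continuous_on {0..T} b"
    and hb: "\<And>n s. s \<in> {0..T} \<Longrightarrow> 0 \<le> h n s \<and> h n s \<le> b s"
    and lim: "\<And>s. s \<in> {0..T} \<Longrightarrow> (\<lambda>n. h n s) \<longlonglongrightarrow> g s" and t: "t \<in> {0..T}"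
  shows "(\<lambda>n. second_primitive (h n) t) \<longlonglongrightarrow> second_primitive g t"
  unfolding second_primitive_def
proof (rule dominated_convergence(2))
  show "(\<lambda>s. (t - s) * h n s) integrable_on {0..t}" for n
    using t by (intro integrable_continuous_subinterval[of 0 T] continuous_intros h) auto
  show "(\<lambda>s. T * b s) integrable_on {0..t}"
    using t by (intro integrable_continuous_subinterval[of 0 T] continuous_intros b) auto
  show "norm ((t - s) * h n s) \<le> T * b s" if "s \<in> {0..t}" for n s
    using that t hb[of s n] by (auto simp: abs_mult intro!: mult_mono)
  show "(\<lambda>n. (t - s) * h n s) \<longlonglongrightarrow> (t - s) * g s" if "s \<in> {0..t}" for s
    using that t by (intro tendsto_mult tendsto_const lim) auto
qed

lemma bc_functional_tendsto:
  assumes h: "\<And>n. continuous_on {0..T} (h n)" and b: "continuous_on {0..T} b"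
    and hb: "\<And>n s. s \<in> {0..T} \<Longrightarrow> 0 \<le> h n s \<and> h n s \<le> b s"
    and lim: "\<And>s. s \<in> {0..T} \<Longrightarrow> (\<lambda>n. h n s) \<longlonglongrightarrow> g s" and eta: "0 \<le> \<eta>" "\<eta> \<le> T"
  shows "(\<lambda>n. bc_functional T \<alpha> \<eta> (h n)) \<longlonglongrightarrow> bc_functional T \<alpha> \<eta> g"
proof -
  note G_lim = second_primitive_tendsto[OF h b hb lim]
  have "(\<lambda>n. integral {0..\<eta>} (second_primitive (h n))) \<longlonglongrightarrow> integral {0..\<eta>} (second_primitive g)"
  proof (rule dominated_convergence(2))
    show "second_primitive (h n) integrable_on {0..\<eta>}" for n
      using eta by (intro integrable_continuous_subinterval[of 0 T] continuous_on_second_primitive h) auto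
    show "second_primitive b integrable_on {0..\<eta>}"
      using eta by (intro integrable_continuous_subinterval[of 0 T] continuous_on_second_primitive b) auto
    show "norm (second_primitive (h n) x) \<le> second_primitive b x" if "x \<in> {0..\<eta>}" for n x
      using that eta hb second_primitive_nonneg[of x "h n"]
      by (auto intro!: second_primitive_le[OF h b])
    show "(\<lambda>n. second_primitive (h n) x) \<longlonglongrightarrow> second_primitive g x" if "x \<in> {0..\<eta>}" for x
      using that eta by (intro G_lim) auto
  qed
  then show ?thesis
    unfolding bc_functional_def using eta by (intro tendsto_intros G_lim) auto
qed

lemma lagged_interpolant_tendsto:
  fixes U :: "nat \<Rightarrow> real \<Rightarrow> real" and v :: "nat \<Rightarrow> nat \<Rightarrow> real" and N :: "nat \<Rightarrow> nat"
  assumes T: "T > 0" and s: "s \<in> {0..T}" and N: "filterlim N at_top sequentially"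
    and nodes: "\<And>n j. j \<le> N n \<Longrightarrow> v n j = \<phi> (U n (real j * T / real (N n)))"
    and lip: "\<And>n x y. x \<in> {0..T} \<Longrightarrow> y \<in> {0..T} \<Longrightarrow> \<bar>U n x - U n y\<bar> \<le> L * \<bar>x - y\<bar>"
    and lim: "(\<lambda>n. U n s) \<longlonglongrightarrow> y" and \<phi>: "isCont \<phi> y"
  shows "(\<lambda>n. lagged_interpolant T (N n) (v n) s) \<longlonglongrightarrow> \<phi> y"
proof (rule tendstoI)
  fix e :: real assume e: "0 < e"
  obtain d where d: "0 < d" "\<And>z. \<bar>z - y\<bar> < d \<Longrightarrow> \<bar>\<phi> z - \<phi> y\<bar> < e / 2"
    using \<phi> e unfolding continuous_at_eps_delta dist_real_def by (meson half_gt_zero)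
  define L' where "L' = \<bar>L\<bar> + 1"
  have L': "0 < L'" "L \<le> L'" unfolding L'_def by auto
  have "((\<lambda>n. L' * (2 * T) / real (N n)) \<longlongrightarrow> 0) sequentially"
    using filterlim_at_top_imp_at_infinity[OF filterlim_compose[OF filterlim_real_sequentially N]]
    by (rule tendsto_divide_0[OF tendsto_const])
  then have "eventually (\<lambda>n. L' * (2 * T) / real (N n) < d / 2) sequentially"
    using d by (intro order_tendstoD) auto
  moreover have "eventually (\<lambda>n. \<bar>U n s - y\<bar> < d / 2) sequentially"
    using tendstoD[OF lim, of "d / 2"] d by (simp add: dist_real_def)
  moreover have "eventually (\<lambda>n. 0 < N n) sequentially"
    using N unfolding filterlim_iff by (metis eventually_gt_at_top)
  ultimately show "eventually (\<lambda>n. dist (lagged_interpolant T (N n) (v n) s) (\<phi> y) < e) sequentially"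
  proof eventually_elim
    case (elim n)
    have near: "\<phi> y - e / 2 \<le> v n j \<and> v n j \<le> \<phi> y + e / 2"
      if j: "j \<le> N n" "\<bar>real j * T / real (N n) - s\<bar> < 2 * T / real (N n)" for j
    proof -
      have "\<bar>U n (real j * T / real (N n)) - U n s\<bar> \<le> L' * \<bar>real j * T / real (N n) - s\<bar>"
        using lip[OF grid_point[OF T elim(3) j(1)] s, of n]
        mult_right_mono[OF L'(2) abs_ge_zero, of "real j * T / real (N n) - s"] by linarith
      also have "\<dots> \<le> L' * (2 * T / real (N n))"
        using j(2) L' by (intro mult_left_mono) auto
      also have "\<dots> = L' * (2 * T) / real (N n)" by simp
      finally have "\<bar>U n (real j * T / real (N n)) - y\<bar> < d"
        using elim(1,2) by linarith
      then have "\<bar>\<phi> (U n (real j * T / real (N n))) - \<phi> y\<bar> < e / 2" by (rule d(2))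
      then show ?thesis unfolding nodes[OF j(1)] abs_less_iff by linarith
    qed
    have "\<phi> y - e / 2 \<le> lagged_interpolant T (N n) (v n) s"
      by (intro lagged_interpolant_ge[OF T elim(3) s] conjunct1[OF near])
    moreover have "lagged_interpolant T (N n) (v n) s \<le> \<phi> y + e / 2"
      by (intro lagged_interpolant_le[OF T elim(3) s] conjunct2[OF near])
    ultimately show ?case using e by (simp add: dist_real_def abs_le_iff)
  qed
qed

lemma lipschitz_family_convergent_subseq:
  fixes U :: "nat \<Rightarrow> real \<Rightarrow> real"
  assumes bound: "\<And>n x. x \<in> {a..b} \<Longrightarrow> \<bar>U n x\<bar> \<le> M"
    and lip: "\<And>n x y. x \<in> {a..b} \<Longrightarrow> y \<in> {a..b} \<Longrightarrow> \<bar>U n x - U n y\<bar> \<le> L * \<bar>x - y\<bar>"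
  obtains u and k :: "nat \<Rightarrow> nat"
  where "continuous_on {a..b} u" "strict_mono k" "\<And>x. x \<in> {a..b} \<Longrightarrow> (\<lambda>n. U (k n) x) \<longlonglongrightarrow> u x"
proof -
  obtain u and k :: "nat \<Rightarrow> nat" where u: "continuous_on {a..b} u" and k: "strict_mono k"
    and unif: "\<And>e. 0 < e \<Longrightarrow> \<exists>M. \<forall>n x. n \<ge> M \<and> x \<in> {a..b} \<longrightarrow> norm (U (k n) x - u x) < e"
  proof (rule Arzela_Ascoli[of "{a..b}" U M])
    fix x e :: real assume x: "x \<in> {a..b}" and e: "0 < e"
    show "\<exists>d. 0 < d \<and> (\<forall>n y. y \<in> {a..b} \<and> norm (x - y) < d \<longrightarrow> norm (U n x - U n y) < e)"
    proof (intro exI conjI allI impI)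
      show "0 < e / (\<bar>L\<bar> + 1)" using e by simp
      fix n y assume y: "y \<in> {a..b} \<and> norm (x - y) < e / (\<bar>L\<bar> + 1)"
      have "L * \<bar>x - y\<bar> \<le> (\<bar>L\<bar> + 1) * \<bar>x - y\<bar>" by (intro mult_right_mono) auto
      then have "\<bar>U n x - U n y\<bar> \<le> (\<bar>L\<bar> + 1) * \<bar>x - y\<bar>"
        using lip[OF x, of y n] y by linarith
      also have "\<dots> < e" using y by (simp add: field_simps)
      finally show "norm (U n x - U n y) < e" by simp
    qed
  next
    fix n x assume "x \<in> {a..b}"
    then show "norm (U n x) \<le> M" using bound by simp
  qed (simp, rule that)
  have "(\<lambda>n. U (k n) x) \<longlonglongrightarrow> u x" if "x \<in> {a..b}" for x
  proof (rule LIMSEQ_I)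
    fix e :: real assume "0 < e"
    then obtain M where "\<forall>n x. n \<ge> M \<and> x \<in> {a..b} \<longrightarrow> norm (U (k n) x - u x) < e"
      using unif by blast
    then show "\<exists>M. \<forall>n\<ge>M. norm (U (k n) x - u x) < e" using that by blast
  qed
  with u k show thesis by (rule that)
qed

lemma f_0_eq_0:
  fixes f :: "real \<Rightarrow> real"
  assumes f: "continuous_on {0..} f" and lim: "((\<lambda>u. f u / u) \<longlongrightarrow> l) (at_right 0)"
  shows "f 0 = 0"
proof -
  have "(f \<longlongrightarrow> f 0) (at_right 0)"
    using f by (auto simp: continuous_on_def intro: tendsto_within_subset)
  moreover have "((\<lambda>u. u * (f u / u)) \<longlongrightarrow> 0) (at_right 0)"
    using tendsto_mult[OF tendsto_ident_at lim] by simp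
  moreover have "\<forall>\<^sub>F u in at_right 0. u * (f u / u) = f u"
    using eventually_at_right_less[of "0::real"] by eventually_elim simp
  ultimately have "(f \<longlongrightarrow> f 0) (at_right 0)" "(f \<longlongrightarrow> 0) (at_right 0)"
    by (simp_all add: tendsto_cong)
  then show ?thesis using tendsto_unique[OF trivial_limit_at_right_real] by blast
qed

locale nonlocal_bvp =
  fixes T \<eta> \<alpha> :: real and a f :: "real \<Rightarrow> real"
  assumes T: "T > 0" and eta: "0 < \<eta>" "\<eta> < T" and alpha: "0 < \<alpha>" "\<alpha> * \<eta> < 1"
    and a_cont: "continuous_on {0..T} a" and a_nonneg: "\<And>t. t \<in> {0..T} \<Longrightarrow> 0 \<le> a t"
    and f_cont: "continuous_on {0..} f" and f_nonneg: "\<And>u. 0 \<le> u \<Longrightarrow> 0 \<le> f u"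
begin

abbreviation "\<gamma> \<equiv> gammaP T \<alpha> \<eta>"

lemma eta_bounds: "0 \<le> \<eta>" "\<eta> \<le> T"
  using eta by auto

lemma gamma_bounds: "0 < \<gamma>" "\<gamma> < 1" "(1 - \<gamma>) * (1 - \<alpha> * \<eta>\<^sup>2 / T) = 1 - \<alpha> * \<eta>"
  using gammaP_bounds[OF eta alpha] by auto

text \<open>The approximation scheme may leave \<open>[0, \<infinity>)\<close>, so \<open>f\<close> is extended by the constant \<open>f 0\<close>.\<close>
definition F :: "real \<Rightarrow> real" where
  "F x = f (max x 0)"

lemma F_eq: "0 \<le> x \<Longrightarrow> F x = f x"
  by (simp add: F_def)

lemma F_nonneg: "0 \<le> F x"
  by (simp add: F_def f_nonneg)

lemma continuous_on_F: "continuous_on S F"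
  unfolding F_def
  by (rule continuous_on_compose2[OF f_cont]) (auto intro!: continuous_intros)

lemma F_bounded_above: "\<exists>B. \<forall>x\<le>c. F x \<le> B"
proof -
  have "compact (f ` {0..max c 0})"
    by (intro compact_continuous_image continuous_on_subset[OF f_cont]) auto
  then obtain B where "\<forall>y\<in>f ` {0..max c 0}. norm y \<le> B"
    using compact_imp_bounded bounded_iff by metis
  then have B: "\<And>y. y \<in> {0..max c 0} \<Longrightarrow> \<bar>f y\<bar> \<le> B" by auto
  show ?thesis
  proof (intro exI allI impI)
    fix x assume "x \<le> c"
    then have "max x 0 \<in> {0..max c 0}" by auto
    then show "F x \<le> B" using B[of "max x 0"] by (simp add: F_def)
  qed
qed

lemma continuous_on_load: "continuous_on {0..T} u \<Longrightarrow> continuous_on {0..T} (\<lambda>s. a s * F (u s))"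
  by (intro continuous_intros a_cont continuous_on_compose2[OF continuous_on_F]) auto

lemma load_nonneg: "s \<in> {0..T} \<Longrightarrow> 0 \<le> a s * F (u s)"
  by (simp add: a_nonneg F_nonneg)

lemma bc_functional_gt:
  assumes g: "continuous_on {0..T} g" and gn: "\<And>s. s \<in> {0..T} \<Longrightarrow> g s \<ge> 0"
    and G: "(1 - \<gamma>) * c < second_primitive g T"
  shows "c * (1 - \<alpha> * \<eta>) < bc_functional T \<alpha> \<eta> g"
proof -
  have "\<alpha> * \<eta> * \<eta> < 1 * \<eta>" using alpha eta by (intro mult_strict_right_mono) auto
  moreover have "\<alpha> * \<eta>\<^sup>2 = \<alpha> * \<eta> * \<eta>" by (simp add: power2_eq_square)
  ultimately have "\<alpha> * \<eta>\<^sup>2 < T" using eta by linarith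
  then have "0 < 1 - \<alpha> * \<eta>\<^sup>2 / T" using T by (simp add: field_simps)
  then have "(1 - \<gamma>) * c * (1 - \<alpha> * \<eta>\<^sup>2 / T) < second_primitive g T * (1 - \<alpha> * \<eta>\<^sup>2 / T)"
    by (rule mult_strict_right_mono[OF G])
  also have "\<dots> \<le> bc_functional T \<alpha> \<eta> g"
    using g gn eta_bounds alpha T by (intro bc_functional_ge_scaled) auto
  finally show ?thesis using gamma_bounds(3) by (simp add: algebra_simps)
qed

text \<open>Levels \<open>c\<close> that cannot be \<open>u 0 = \<parallel>u\<parallel>\<close> for a solution \<open>u\<close>, because \<open>F\<close> is too small below
  \<open>c\<close>, resp. too large on \<open>[\<gamma> c, c]\<close>, for the boundary condition; they also fix the sign of the
  shooting defect below.\<close>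
definition subcritical :: "real \<Rightarrow> bool" where
  "subcritical c \<longleftrightarrow> (\<exists>B. (\<forall>x\<le>c. F x \<le> B) \<and> B * second_primitive a T < c * (1 - \<alpha> * \<eta>))"

definition supercritical :: "real \<Rightarrow> bool" where
  "supercritical c \<longleftrightarrow>
     (\<exists>K\<ge>0. (\<forall>x\<in>{\<gamma> * c..c}. K \<le> F x) \<and> c * (1 - \<alpha> * \<eta>) < K * Lambda2_denom T \<alpha> \<eta> a)"

definition integral_solution :: "(real \<Rightarrow> real) \<Rightarrow> real \<Rightarrow> bool" where
  "integral_solution u c \<longleftrightarrow> continuous_on {0..T} u
     \<and> (\<forall>t\<in>{0..T}. u t = c - second_primitive (\<lambda>s. a s * F (u s)) t)
     \<and> c * (1 - \<alpha> * \<eta>) = bc_functional T \<alpha> \<eta> (\<lambda>s. a s * F (u s))"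

context
  fixes u c assumes sol: "integral_solution u c"
begin

lemma integral_solution_eq: "t \<in> {0..T} \<Longrightarrow> u t = c - second_primitive (\<lambda>s. a s * F (u s)) t"
  using sol by (simp add: integral_solution_def)

lemma integral_solution_bc: "c * (1 - \<alpha> * \<eta>) = bc_functional T \<alpha> \<eta> (\<lambda>s. a s * F (u s))"
  using sol by (simp add: integral_solution_def)

lemma continuous_on_integral_solution_load: "continuous_on {0..T} (\<lambda>s. a s * F (u s))"
  using sol by (simp add: integral_solution_def continuous_on_load)

lemma integral_solution_bounds:
  assumes t: "t \<in> {0..T}"
  shows "\<gamma> * c \<le> u t" "u t \<le> c"
proof -
  let ?h = "\<lambda>s. a s * F (u s)"
  have "\<not> (1 - \<gamma>) * c < second_primitive ?h T"
  proof
    assume "(1 - \<gamma>) * c < second_primitive ?h T"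
    then have "c * (1 - \<alpha> * \<eta>) < bc_functional T \<alpha> \<eta> ?h"
      by (intro bc_functional_gt continuous_on_integral_solution_load load_nonneg)
    then show False using integral_solution_bc by simp
  qed
  moreover have "second_primitive ?h t \<le> second_primitive ?h T"
    using t by (intro second_primitive_mono[OF continuous_on_integral_solution_load load_nonneg[of _ u]]) auto
  moreover have "0 \<le> second_primitive ?h t"
    using t by (intro second_primitive_nonneg load_nonneg[of _ u]) auto
  ultimately show "\<gamma> * c \<le> u t" "u t \<le> c"
    using integral_solution_eq[OF t] by (simp_all add: algebra_simps)
qed

lemma integral_solution_nonneg:
  assumes "0 \<le> c" "t \<in> {0..T}"
  shows "0 \<le> u t"
  using integral_solution_bounds(1)[OF assms(2)] gamma_bounds(1) assms(1) mult_nonneg_nonneg[of \<gamma> c]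
  by linarith

lemma integral_solution_not_subcritical: "\<not> subcritical c"
proof
  assume "subcritical c"
  then obtain B where B: "\<And>x. x \<le> c \<Longrightarrow> F x \<le> B" and BI: "B * second_primitive a T < c * (1 - \<alpha> * \<eta>)"
    unfolding subcritical_def by auto
  have "bc_functional T \<alpha> \<eta> (\<lambda>s. a s * F (u s)) \<le> B * second_primitive a T"
  proof (rule bc_functional_le[OF continuous_on_integral_solution_load load_nonneg[of _ u] eta_bounds _ a_cont])
    fix s assume s: "s \<in> {0..T}"
    show "a s * F (u s) \<le> B * a s"
      using mult_left_mono[OF B a_nonneg[OF s]] integral_solution_bounds[OF s] by (simp add: mult.commute)
  qed (use alpha in auto)
  then show False using integral_solution_bc BI by simp
qed

lemma integral_solution_not_supercritical: "\<not> supercritical c"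
proof
  assume "supercritical c"
  then obtain K where K: "K \<ge> 0" "\<And>x. x \<in> {\<gamma> * c..c} \<Longrightarrow> K \<le> F x"
    and KD: "c * (1 - \<alpha> * \<eta>) < K * Lambda2_denom T \<alpha> \<eta> a"
    unfolding supercritical_def by auto
  have "K * Lambda2_denom T \<alpha> \<eta> a \<le> bc_functional T \<alpha> \<eta> (\<lambda>s. a s * F (u s))"
  proof (rule bc_functional_ge_Lambda2_denom[OF continuous_on_integral_solution_load load_nonneg[of _ u]
        eta_bounds _ a_cont a_nonneg K(1)])
    fix s assume s: "s \<in> {0..T}"
    show "K * a s \<le> a s * F (u s)"
      using mult_left_mono[OF K(2) a_nonneg[OF s]] integral_solution_bounds[OF s] by (simp add: mult.commute)
  qed (use alpha in auto)
  then show False using integral_solution_bc KD by simp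
qed

lemma supnorm_integral_solution:
  assumes "0 \<le> c"
  shows "supnorm T u = c"
  unfolding supnorm_def
proof (rule cSup_eq_maximum)
  show "c \<in> (\<lambda>t. \<bar>u t\<bar>) ` {0..T}"
    using integral_solution_eq[of 0] assms T by (intro image_eqI[of _ _ 0]) auto
  show "y \<le> c" if "y \<in> (\<lambda>t. \<bar>u t\<bar>) ` {0..T}" for y
    using that integral_solution_bounds(2) integral_solution_nonneg[OF assms] by auto
qed

lemma positive_solution_of_integral_solution:
  assumes c: "0 < c"
  shows "positive_solution T \<eta> \<alpha> a f u"
proof -
  let ?h = "\<lambda>s. a s * F (u s)"
  define u' where "u' t = - integral {0..t} ?h" for t
  have nonneg: "0 \<le> u t" if "t \<in> {0..T}" for t
    using c that by (intro integral_solution_nonneg) auto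
  have "C2_on T u u' (\<lambda>t. - ?h t)"
    unfolding C2_on_def
  proof (intro conjI ballI)
    fix t assume t: "t \<in> {0..T}"
    have "((\<lambda>x. c - second_primitive ?h x) has_real_derivative - integral {0..t} ?h) (at t within {0..T})"
      using DERIV_diff[OF DERIV_const has_real_derivative_second_primitive[OF
          continuous_on_integral_solution_load t]] by simp
    then show "(u has_real_derivative u' t) (at t within {0..T})"
      unfolding u'_def
      by (rule has_field_derivative_transform_within[where d=1]) (use t integral_solution_eq in auto)
    show "(u' has_real_derivative - ?h t) (at t within {0..T})"
      unfolding u'_def
      by (intro DERIV_minus integral_has_real_derivative continuous_on_integral_solution_load t)
  qed (intro continuous_intros continuous_on_integral_solution_load)
  moreover have "u T = \<alpha> * integral {0..\<eta>} u"
  proof -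
    have "integral {0..\<eta>} u = integral {0..\<eta>} (\<lambda>t. c - second_primitive ?h t)"
      using eta_bounds by (intro integral_cong integral_solution_eq) auto
    also have "\<dots> = c * \<eta> - integral {0..\<eta>} (second_primitive ?h)"
      using eta_bounds
      by (subst integral_diff) (auto intro!: integrable_continuous_subinterval[of 0 T]
          continuous_on_second_primitive continuous_on_integral_solution_load)
    finally have "\<alpha> * integral {0..\<eta>} u = \<alpha> * (c * \<eta>) - \<alpha> * integral {0..\<eta>} (second_primitive ?h)"
      by (simp add: right_diff_distrib)
    then show ?thesis
      using integral_solution_bc integral_solution_eq[of T] T
      by (simp add: bc_functional_def algebra_simps)
  qed
  moreover have "\<forall>t\<in>{0<..<T}. - ?h t + a t * f (u t) = 0"
    using nonneg by (simp add: F_eq)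
  moreover have "u' 0 = 0" by (simp add: u'_def)
  moreover have "\<exists>t\<in>{0..T}. u t \<noteq> 0"
    using integral_solution_eq[of 0] T c by (intro bexI[of _ 0]) auto
  ultimately show ?thesis
    unfolding positive_solution_def using nonneg by blast
qed

end

text \<open>Explicit shooting scheme with mesh \<open>T / N\<close> and initial value \<open>c\<close>: \<open>grid_values N c j\<close> is the
  approximate solution at the \<open>j\<close>-th grid point, computed from the earlier ones only.\<close>
definition grid_weight :: "nat \<Rightarrow> nat \<Rightarrow> nat \<Rightarrow> real" where
  "grid_weight N i j = second_primitive (\<lambda>s. a s * hat (s * (real N / T) - real i)) (real j * T / real N)"

fun grid_values :: "nat \<Rightarrow> real \<Rightarrow> nat \<Rightarrow> real" where
  "grid_values N c 0 = c"
| "grid_values N c (Suc j) = c - (\<Sum>i\<le>Suc j. F (grid_values N c (i - 1)) * grid_weight N i (Suc j))"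

definition approx_load :: "nat \<Rightarrow> real \<Rightarrow> real \<Rightarrow> real" where
  "approx_load N c s = a s * lagged_interpolant T N (\<lambda>j. F (grid_values N c j)) s"

definition approx_solution :: "nat \<Rightarrow> real \<Rightarrow> real \<Rightarrow> real" where
  "approx_solution N c t = c - second_primitive (approx_load N c) t"

definition shooting_defect :: "nat \<Rightarrow> real \<Rightarrow> real" where
  "shooting_defect N c = c * (1 - \<alpha> * \<eta>) - bc_functional T \<alpha> \<eta> (approx_load N c)"

lemma continuous_on_approx_load: "continuous_on {0..T} (approx_load N c)"
  unfolding approx_load_def by (intro continuous_intros a_cont)

lemma approx_load_expand:
  "approx_load N c = (\<lambda>s. \<Sum>i\<le>N. F (grid_values N c (i - 1)) * (a s * hat (s * (real N / T) - real i)))"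
  by (simp add: fun_eq_iff approx_load_def lagged_interpolant_def sum_distrib_left algebra_simps)

lemma approx_load_nonneg: "s \<in> {0..T} \<Longrightarrow> 0 \<le> approx_load N c s"
  unfolding approx_load_def lagged_interpolant_def
  by (intro mult_nonneg_nonneg sum_nonneg a_nonneg F_nonneg hat_nonneg) auto

lemma approx_solution_grid:
  assumes N: "0 < N" and j: "j \<le> N"
  shows "approx_solution N c (real j * T / real N) = grid_values N c j"
proof -
  let ?t = "real j * T / real N" and ?g = "\<lambda>i s. a s * hat (s * (real N / T) - real i)"
  have vanish: "second_primitive (?g i) ?t = 0" if "j < i" for i
  proof -
    have "hat (s * (real N / T) - real i) = 0" if "s \<in> {0..?t}" for s
    proof -
      have "s * (real N / T) \<le> real j" using that T N by (auto simp: field_simps)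
      then show ?thesis using \<open>j < i\<close> by (intro hat_eq_0) auto
    qed
    then have "integral {0..?t} (\<lambda>s. (?t - s) * ?g i s) = integral {0..?t} (\<lambda>s. 0)"
      by (intro integral_cong) simp
    then show ?thesis unfolding second_primitive_def by simp
  qed
  have "second_primitive (approx_load N c) ?t = (\<Sum>i\<le>N. F (grid_values N c (i - 1)) * second_primitive (?g i) ?t)"
    unfolding approx_load_expand
    by (intro second_primitive_sum[where T=T] grid_point[OF T N j] continuous_intros a_cont) auto
  also have "\<dots> = (\<Sum>i\<le>j. F (grid_values N c (i - 1)) * grid_weight N i j)"
    unfolding grid_weight_def using j vanish
    by (intro sum.mono_neutral_right) auto
  finally show ?thesis
    by (cases j) (simp_all add: approx_solution_def)
qed

lemma grid_values_le:
  assumes "0 < N" "j \<le> N"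
  shows "grid_values N c j \<le> c"
proof -
  have "0 \<le> second_primitive (approx_load N c) (real j * T / real N)"
    using grid_point[OF T assms] by (intro second_primitive_nonneg approx_load_nonneg) auto
  then show ?thesis using approx_solution_grid[OF assms, of c] unfolding approx_solution_def by linarith
qed

lemma continuous_on_grid_values: "continuous_on UNIV (\<lambda>c. grid_values N c j)"
proof (induction j rule: less_induct)
  case (less j)
  show ?case
  proof (cases j)
    case (Suc k)
    have IH: "continuous_on UNIV (\<lambda>c. F (grid_values N c (i - 1)))" if "i \<le> Suc k" for i
      using that Suc by (intro continuous_on_compose2[OF continuous_on_F less.IH]) auto
    show ?thesis unfolding Suc grid_values.simps by (intro continuous_intros IH) auto
  qed (simp add: continuous_on_id)
qed

lemma continuous_on_shooting_defect: "continuous_on S (shooting_defect N)"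
proof -
  have grid: "continuous_on S (\<lambda>c. F (grid_values N c j))" for j
    by (rule continuous_on_subset[OF continuous_on_compose2[OF continuous_on_F continuous_on_grid_values]])
      auto
  have eq: "shooting_defect N = (\<lambda>c. c * (1 - \<alpha> * \<eta>) - (\<Sum>i\<le>N. F (grid_values N c (i - 1))
      * bc_functional T \<alpha> \<eta> (\<lambda>s. a s * hat (s * (real N / T) - real i))))"
    unfolding shooting_defect_def approx_load_expand
    by (intro ext arg_cong2[where f=minus] refl bc_functional_sum eta_bounds continuous_intros a_cont) auto
  show ?thesis
    unfolding eq by (intro continuous_intros grid)
qed

context
  fixes N :: nat assumes N: "0 < N"
begin

lemma approx_load_le:
  assumes "s \<in> {0..T}" "\<And>j. j \<le> N \<Longrightarrow> F (grid_values N c j) \<le> B"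
  shows "approx_load N c s \<le> B * a s"
  using mult_left_mono[OF lagged_interpolant_le[OF T N assms(1)] a_nonneg[OF assms(1)]] assms(2)
  by (simp add: approx_load_def mult.commute)

lemma approx_load_ge:
  assumes "s \<in> {0..T}" "\<And>j. j \<le> N \<Longrightarrow> K \<le> F (grid_values N c j)"
  shows "K * a s \<le> approx_load N c s"
  using mult_left_mono[OF lagged_interpolant_ge[OF T N assms(1)] a_nonneg[OF assms(1)]] assms(2)
  by (simp add: approx_load_def mult.commute)

lemma shooting_defect_pos:
  assumes "subcritical c"
  shows "0 < shooting_defect N c"
proof -
  obtain B where B: "\<And>x. x \<le> c \<Longrightarrow> F x \<le> B" and BI: "B * second_primitive a T < c * (1 - \<alpha> * \<eta>)"
    using assms unfolding subcritical_def by auto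
  have "bc_functional T \<alpha> \<eta> (approx_load N c) \<le> B * second_primitive a T"
    using alpha grid_values_le[OF N] B
    by (intro bc_functional_le[OF continuous_on_approx_load approx_load_nonneg eta_bounds _ a_cont]
        approx_load_le) auto
  then show ?thesis using BI by (simp add: shooting_defect_def)
qed

lemma shooting_defect_neg:
  assumes "supercritical c"
  shows "shooting_defect N c < 0"
proof -
  obtain K where K: "K \<ge> 0" "\<And>x. x \<in> {\<gamma> * c..c} \<Longrightarrow> K \<le> F x"
    and KD: "c * (1 - \<alpha> * \<eta>) < K * Lambda2_denom T \<alpha> \<eta> a"
    using assms unfolding supercritical_def by auto
  have "c * (1 - \<alpha> * \<eta>) < bc_functional T \<alpha> \<eta> (approx_load N c)"
  proof (cases "\<forall>j\<le>N. \<gamma> * c \<le> grid_values N c j")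
    case True
    then have "K * Lambda2_denom T \<alpha> \<eta> a \<le> bc_functional T \<alpha> \<eta> (approx_load N c)"
      using alpha grid_values_le[OF N] K
      by (intro bc_functional_ge_Lambda2_denom[OF continuous_on_approx_load approx_load_nonneg
            eta_bounds _ a_cont a_nonneg K(1)] approx_load_ge) auto
    then show ?thesis using KD by simp
  next
    case False
    then obtain j where j: "j \<le> N" "grid_values N c j < \<gamma> * c" by auto
    have "second_primitive (approx_load N c) (real j * T / real N) \<le> second_primitive (approx_load N c) T"
      using grid_point[OF T N j(1)]
      by (intro second_primitive_mono[OF continuous_on_approx_load approx_load_nonneg]) auto
    then have "(1 - \<gamma>) * c < second_primitive (approx_load N c) T"
      using j(2) approx_solution_grid[OF N j(1), of c] by (simp add: approx_solution_def algebra_simps)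
    then show ?thesis by (intro bc_functional_gt continuous_on_approx_load approx_load_nonneg)
  qed
  then show ?thesis by (simp add: shooting_defect_def)
qed

end

lemma approx_solution_lipschitz:
  assumes N: "0 < N" and B: "\<And>x. x \<le> c \<Longrightarrow> F x \<le> B"
    and x: "x \<in> {0..T}" and y: "y \<in> {0..T}"
  shows "\<bar>approx_solution N c x - approx_solution N c y\<bar> \<le> B * integral {0..T} a * \<bar>x - y\<bar>"
proof -
  have load: "approx_load N c s \<le> B * a s" if "s \<in> {0..T}" for s
    using that B grid_values_le[OF N] by (intro approx_load_le[OF N]) auto
  have cont: "continuous_on {0..T} (approx_load N c)" by (rule continuous_on_approx_load)
  have nonneg: "\<And>s. s \<in> {0..T} \<Longrightarrow> 0 \<le> approx_load N c s" by (rule approx_load_nonneg)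
  have "integral {0..T} (approx_load N c) \<le> integral {0..T} (\<lambda>s. B * a s)"
    using load by (intro integral_le integrable_continuous_interval continuous_intros
        continuous_on_approx_load a_cont)
  then have int: "integral {0..T} (approx_load N c) \<le> B * integral {0..T} a" by simp
  let ?G = "second_primitive (approx_load N c)"
  have inc: "0 \<le> ?G t' - ?G t \<and> ?G t' - ?G t \<le> B * integral {0..T} a * \<bar>t' - t\<bar>"
    if "0 \<le> t" "t \<le> t'" "t' \<le> T" for t t'
    using second_primitive_mono[OF cont nonneg that] second_primitive_lipschitz[OF cont nonneg that]
      mult_right_mono[OF int, of "t' - t"] that by auto
  have "\<bar>?G y - ?G x\<bar> \<le> B * integral {0..T} a * \<bar>x - y\<bar>"
  proof (cases "x \<le> y")
    case True
    then show ?thesis using inc[of x y] x y by (simp add: abs_minus_commute)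
  next
    case False
    then show ?thesis using inc[of y x] x y by (simp add: abs_minus_commute)
  qed
  then show ?thesis by (simp add: approx_solution_def)
qed

lemma approx_load_tendsto:
  assumes N: "filterlim N at_top sequentially" "\<And>n. 0 < N n"
    and lip: "\<And>n x y. x \<in> {0..T} \<Longrightarrow> y \<in> {0..T} \<Longrightarrow>
      \<bar>approx_solution (N n) (c n) x - approx_solution (N n) (c n) y\<bar> \<le> L * \<bar>x - y\<bar>"
    and lim: "\<And>x. x \<in> {0..T} \<Longrightarrow> (\<lambda>n. approx_solution (N n) (c n) x) \<longlonglongrightarrow> u x"
    and s: "s \<in> {0..T}"
  shows "(\<lambda>n. approx_load (N n) (c n) s) \<longlonglongrightarrow> a s * F (u s)"
  unfolding approx_load_def
proof (intro tendsto_mult tendsto_const lagged_interpolant_tendsto[OF T s N(1) _ lip lim[OF s]])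
  show "F (grid_values (N n) (c n) j) = F (approx_solution (N n) (c n) (real j * T / real (N n)))"
    if "j \<le> N n" for n j
    using approx_solution_grid[OF N(2) that] by simp
qed (use continuous_on_F[of UNIV] in \<open>simp_all add: continuous_on_eq_continuous_at\<close>)

lemma integral_solution_limit:
  assumes cs: "\<And>n. cs n \<in> {lo..hi}" and root: "\<And>n. shooting_defect (Suc n) (cs n) = 0"
  obtains u c where "c \<in> {lo..hi}" "integral_solution u c"
proof -
  obtain B where B: "\<And>x. x \<le> hi \<Longrightarrow> F x \<le> B" using F_bounded_above by blast
  define L where "L = B * integral {0..T} a"
  define U where "U n = approx_solution (Suc n) (cs n)" for n
  define H where "H n = approx_load (Suc n) (cs n)" for n
  have Bn: "x \<le> cs n \<Longrightarrow> F x \<le> B" for n x using B cs[of n] by auto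
  have lip: "\<bar>U n x - U n y\<bar> \<le> L * \<bar>x - y\<bar>" if "x \<in> {0..T}" "y \<in> {0..T}" for n x y
    unfolding U_def L_def using that Bn by (intro approx_solution_lipschitz) auto
  have U0: "U n 0 = cs n" for n by (simp add: U_def approx_solution_def)
  obtain u and k :: "nat \<Rightarrow> nat" where u: "continuous_on {0..T} u" and k: "strict_mono k"
    and lim: "\<And>x. x \<in> {0..T} \<Longrightarrow> (\<lambda>n. U (k n) x) \<longlonglongrightarrow> u x"
  proof (rule lipschitz_family_convergent_subseq[where U = U])
    fix n x assume x: "x \<in> {0..T}"
    have "L * \<bar>x - 0\<bar> \<le> \<bar>L\<bar> * T" using x by (intro mult_mono) auto
    then have "\<bar>U n x - U n 0\<bar> \<le> \<bar>L\<bar> * T" using lip[OF x, of 0 n] T by simp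
    then show "\<bar>U n x\<bar> \<le> \<bar>lo\<bar> + \<bar>hi\<bar> + \<bar>L\<bar> * T" using cs[of n] U0[of n] by auto
  qed (rule lip, assumption+, rule that)
  define c where "c = u 0"
  have c_lim: "(\<lambda>n. cs (k n)) \<longlonglongrightarrow> c"
    using lim[of 0] T unfolding c_def U0 by simp
  have c: "c \<in> {lo..hi}"
    using cs Lim_bounded[OF c_lim, of 0 hi] Lim_bounded2[OF c_lim, of 0 lo] by auto
  let ?h = "\<lambda>s. a s * F (u s)"
  have "filterlim (\<lambda>n. Suc (k n)) at_top sequentially"
    using k by (intro filterlim_subseq) (simp add: strict_mono_def)
  then have H_lim: "(\<lambda>n. H (k n) s) \<longlonglongrightarrow> ?h s" if "s \<in> {0..T}" for s
    using lip lim that unfolding H_def U_def by (intro approx_load_tendsto) auto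
  have H_bounds: "0 \<le> H n s \<and> H n s \<le> B * a s" if "s \<in> {0..T}" for n s
    unfolding H_def using that by (auto intro!: approx_load_nonneg approx_load_le Bn grid_values_le)
  have H_cont: "continuous_on {0..T} (H n)" for n
    unfolding H_def by (rule continuous_on_approx_load)
  have aB: "continuous_on {0..T} (\<lambda>s. B * a s)" by (intro continuous_intros a_cont)
  have "u t = c - second_primitive ?h t" if t: "t \<in> {0..T}" for t
  proof -
    have "(\<lambda>n. cs (k n) - second_primitive (H (k n)) t) \<longlonglongrightarrow> c - second_primitive ?h t"
      by (intro tendsto_diff c_lim second_primitive_tendsto[OF H_cont aB H_bounds H_lim t])
    moreover have "U (k n) t = cs (k n) - second_primitive (H (k n)) t" for n
      by (simp add: U_def H_def approx_solution_def)
    ultimately show ?thesis using lim[OF t] LIMSEQ_unique by auto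
  qed
  moreover have "c * (1 - \<alpha> * \<eta>) = bc_functional T \<alpha> \<eta> ?h"
  proof -
    have "(\<lambda>n. bc_functional T \<alpha> \<eta> (H (k n))) \<longlonglongrightarrow> bc_functional T \<alpha> \<eta> ?h"
      by (rule bc_functional_tendsto[OF H_cont aB H_bounds H_lim eta_bounds])
    moreover have "bc_functional T \<alpha> \<eta> (H (k n)) = cs (k n) * (1 - \<alpha> * \<eta>)" for n
      using root[of "k n"] by (simp add: H_def shooting_defect_def)
    ultimately have "(\<lambda>n. cs (k n) * (1 - \<alpha> * \<eta>)) \<longlonglongrightarrow> bc_functional T \<alpha> \<eta> ?h" by simp
    moreover have "(\<lambda>n. cs (k n) * (1 - \<alpha> * \<eta>)) \<longlonglongrightarrow> c * (1 - \<alpha> * \<eta>)"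
      by (intro tendsto_mult_right c_lim)
    ultimately show ?thesis using LIMSEQ_unique by blast
  qed
  ultimately have "integral_solution u c" using u unfolding integral_solution_def by blast
  with c show thesis by (rule that)
qed

lemma integral_solution_between:
  assumes lh: "lo \<le> hi"
    and levels: "subcritical lo \<and> supercritical hi \<or> supercritical lo \<and> subcritical hi"
  obtains u c where "lo < c" "c < hi" "integral_solution u c"
proof -
  have "\<exists>c. lo \<le> c \<and> c \<le> hi \<and> shooting_defect (Suc n) c = 0" for n
  proof -
    note pos = shooting_defect_pos[of "Suc n", THEN less_imp_le]
    note neg = shooting_defect_neg[of "Suc n", THEN less_imp_le]
    from levels show ?thesis
    proof
      assume "subcritical lo \<and> supercritical hi"
      then show ?thesis
        using pos neg by (intro IVT2'[OF _ _ lh continuous_on_shooting_defect]) auto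
    next
      assume "supercritical lo \<and> subcritical hi"
      then show ?thesis
        using pos neg by (intro IVT'[OF _ _ lh continuous_on_shooting_defect]) auto
    qed
  qed
  then obtain cs where cs: "\<And>n. cs n \<in> {lo..hi}" "\<And>n. shooting_defect (Suc n) (cs n) = 0"
    by (metis atLeastAtMost_iff)
  obtain u c where c: "c \<in> {lo..hi}" and sol: "integral_solution u c"
    by (rule integral_solution_limit[OF cs])
  have "c \<noteq> lo" "c \<noteq> hi"
    using levels integral_solution_not_subcritical[OF sol] integral_solution_not_supercritical[OF sol]
    by auto
  with c sol show thesis by (intro that) auto
qed

lemma Lambda1_pos: "0 < second_primitive a T \<Longrightarrow> 0 < Lambda1 T \<alpha> \<eta> a"
  using alpha by (simp add: Lambda1_eq)

lemma Lambda1_mult_eq: "0 < second_primitive a T \<Longrightarrow> Lambda1 T \<alpha> \<eta> a * second_primitive a T = 1 - \<alpha> * \<eta>"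
  by (simp add: Lambda1_eq)

lemma less_Lambda1_of_theta:
  assumes "0 \<le> l" "\<exists>\<theta>\<in>{0<..1}. l < \<theta> * Lambda1 T \<alpha> \<eta> a"
  shows "0 < second_primitive a T" "l < Lambda1 T \<alpha> \<eta> a"
proof -
  obtain \<theta> where \<theta>: "0 < \<theta>" "\<theta> \<le> 1" "l < \<theta> * Lambda1 T \<alpha> \<eta> a" using assms(2) by auto
  then have "0 < \<theta> * Lambda1 T \<alpha> \<eta> a" using assms(1) by linarith
  then have L: "0 < Lambda1 T \<alpha> \<eta> a" using \<theta>(1) by (simp add: zero_less_mult_iff)
  then show "0 < second_primitive a T" using alpha by (simp add: Lambda1_eq zero_less_divide_iff)
  have "\<theta> * Lambda1 T \<alpha> \<eta> a \<le> 1 * Lambda1 T \<alpha> \<eta> a" using \<theta>(2) L by (intro mult_right_mono) auto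
  then show "l < Lambda1 T \<alpha> \<eta> a" using \<theta>(3) by linarith
qed

lemma subcritical_of_linear_bound:
  assumes pos: "0 < second_primitive a T" and k: "k < Lambda1 T \<alpha> \<eta> a"
    and r: "0 < r" and B: "\<And>x. x \<le> r \<Longrightarrow> F x \<le> k * r + C"
    and C: "C < (Lambda1 T \<alpha> \<eta> a - k) * r"
  shows "subcritical r"
  unfolding subcritical_def
proof (intro exI conjI)
  show "\<forall>x\<le>r. F x \<le> k * r + C" using B by blast
  have "k * r + C < Lambda1 T \<alpha> \<eta> a * r" using C by (simp add: algebra_simps)
  then have "(k * r + C) * second_primitive a T < Lambda1 T \<alpha> \<eta> a * r * second_primitive a T"
    using pos by (rule mult_strict_right_mono)
  then show "(k * r + C) * second_primitive a T < r * (1 - \<alpha> * \<eta>)"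
    using Lambda1_mult_eq[OF pos] by (simp add: mult.commute mult.left_commute)
qed

lemma eventually_subcritical_at_right_0:
  assumes lim: "((\<lambda>u. f u / u) \<longlongrightarrow> l) (at_right 0)"
    and l: "l < Lambda1 T \<alpha> \<eta> a" and pos: "0 < second_primitive a T"
  shows "eventually subcritical (at_right 0)"
proof -
  define k where "k = (max l 0 + Lambda1 T \<alpha> \<eta> a) / 2"
  have k: "l < k" "0 < k" "k < Lambda1 T \<alpha> \<eta> a"
    using l Lambda1_pos[OF pos] unfolding k_def by auto
  have "eventually (\<lambda>u. f u / u < k) (at_right 0)" by (rule order_tendstoD(2)[OF lim k(1)])
  then obtain r0 where r0: "0 < r0" "\<And>u. 0 < u \<Longrightarrow> u < r0 \<Longrightarrow> f u / u < k"
    unfolding eventually_at_right_field by auto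
  have "subcritical r" if r: "0 < r" "r < r0" for r
  proof (rule subcritical_of_linear_bound[OF pos k(3) r(1), of 0])
    fix x assume x: "x \<le> r"
    show "F x \<le> k * r + 0"
    proof (cases "0 < x")
      case True
      then have "F x \<le> k * x" using r0(2)[of x] x r F_eq by (simp add: divide_less_eq)
      also have "\<dots> \<le> k * r" using x k by simp
      finally show ?thesis by simp
    qed (use f_0_eq_0[OF f_cont lim] r k in \<open>simp add: F_def\<close>)
  qed (use k r in simp)
  then show ?thesis unfolding eventually_at_right_field using r0(1) by blast
qed

lemma eventually_subcritical_at_top:
  assumes lim: "((\<lambda>u. f u / u) \<longlongrightarrow> l) at_top"
    and l: "l < Lambda1 T \<alpha> \<eta> a" and pos: "0 < second_primitive a T"
  shows "eventually subcritical at_top"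
proof -
  define k where "k = (max l 0 + Lambda1 T \<alpha> \<eta> a) / 2"
  have k: "l < k" "0 < k" "k < Lambda1 T \<alpha> \<eta> a"
    using l Lambda1_pos[OF pos] unfolding k_def by auto
  have "eventually (\<lambda>u. f u / u < k) at_top" by (rule order_tendstoD(2)[OF lim k(1)])
  then obtain X0 where X0: "\<And>u. X0 \<le> u \<Longrightarrow> f u / u < k"
    unfolding eventually_at_top_linorder by blast
  define X where "X = max X0 1"
  have X: "0 < X" "\<And>u. X \<le> u \<Longrightarrow> f u / u < k" using X0 unfolding X_def by auto
  obtain C where C: "\<And>x. x \<le> X \<Longrightarrow> F x \<le> C" using F_bounded_above by blast
  have C0: "0 \<le> C" using C[of 0] X F_nonneg[of 0] by simp
  have "subcritical R" if R: "X \<le> R" "C / (Lambda1 T \<alpha> \<eta> a - k) < R" for R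
  proof (rule subcritical_of_linear_bound[OF pos k(3)])
    show "0 < R" using R X by simp
  next
    fix x assume x: "x \<le> R"
    show "F x \<le> k * R + C"
    proof (cases "X \<le> x")
      case True
      then have "F x \<le> k * x" using X(2)[OF True] X(1) F_eq[of x] by (simp add: divide_less_eq)
      also have "\<dots> \<le> k * R" using x k by simp
      finally show ?thesis using C0 by simp
    qed (use C k R X in \<open>simp add: add_increasing\<close>)
  next
    show "C < (Lambda1 T \<alpha> \<eta> a - k) * R" using R k by (simp add: field_simps)
  qed
  then show ?thesis
    unfolding eventually_at_top_linorder
    by (intro exI[of _ "max X (C / (Lambda1 T \<alpha> \<eta> a - k) + 1)"]) auto
qed

lemma supercritical_of_lower_bound:
  assumes pos: "0 < second_primitive a T" and \<rho>: "0 < \<rho>" and M: "Lambda2 T \<alpha> \<eta> a \<le> M"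
    and f: "\<forall>u\<in>{\<gamma> * \<rho>..\<rho>}. M * \<rho> \<le> f u"
  shows "supercritical \<rho>"
  unfolding supercritical_def
proof (intro exI conjI ballI)
  have D: "0 < Lambda2_denom T \<alpha> \<eta> a"
    using eta alpha by (intro Lambda2_denom_pos[OF a_cont a_nonneg _ _ _ pos]) auto
  have "1 - \<alpha> * \<eta> < (1 - \<alpha> * \<eta>) / \<gamma>"
    using gamma_bounds alpha by (simp add: less_divide_eq)
  also have "\<dots> = Lambda2 T \<alpha> \<eta> a * Lambda2_denom T \<alpha> \<eta> a"
    using D gamma_bounds by (simp add: Lambda2_eq)
  also have "\<dots> \<le> M * Lambda2_denom T \<alpha> \<eta> a"
    using M D by (simp add: mult_right_mono)
  finally show "\<rho> * (1 - \<alpha> * \<eta>) < M * \<rho> * Lambda2_denom T \<alpha> \<eta> a"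
    using \<rho> by (simp add: mult.commute mult.left_commute)
  have "0 < Lambda2 T \<alpha> \<eta> a" using D gamma_bounds alpha by (simp add: Lambda2_eq)
  then show "0 \<le> M * \<rho>" using M \<rho> by simp
  fix x assume x: "x \<in> {\<gamma> * \<rho>..\<rho>}"
  moreover have "0 < \<gamma> * \<rho>" using gamma_bounds \<rho> by simp
  ultimately have "0 \<le> x" by simp
  then show "M * \<rho> \<le> F x" using f x F_eq by simp
qed

end

theorem corollary5p5:
  fixes T \<eta> \<alpha> \<rho>2 M2 \<alpha>1 \<beta>2 :: real and f a :: "real \<Rightarrow> real"
  assumes T: "T > 0" and eta: "0 < \<eta>" "\<eta> < T"
    and alpha: "0 < \<alpha>" "\<alpha> < 1 / \<eta>"
    and f_cont: "continuous_on {0..} f" and f_nonneg: "\<forall>u\<ge>0. f u \<ge> 0"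
    and a_cont: "continuous_on {0..T} a" and a_nonneg: "\<forall>t\<in>{0..T}. a t \<ge> 0"
    and a_pos: "\<exists>t0\<in>{0..T}. a t0 > 0"
    and hyp_a: "\<rho>2 > 0" "M2 \<ge> Lambda2 T \<alpha> \<eta> a"
               "\<forall>u\<in>{gammaP T \<alpha> \<eta> * \<rho>2..\<rho>2}. f u \<ge> M2 * \<rho>2"
    and hyp_b: "((\<lambda>u. f u / u) \<longlongrightarrow> \<alpha>1) (at_right 0)" "\<alpha>1 \<ge> 0"
               "\<exists>\<theta>1\<in>{0<..1}. \<alpha>1 < \<theta>1 * Lambda1 T \<alpha> \<eta> a"
    and hyp_c: "((\<lambda>u. f u / u) \<longlongrightarrow> \<beta>2) at_top" "\<beta>2 \<ge> 0"
               "\<exists>\<theta>1\<in>{0<..1}. \<beta>2 < \<theta>1 * Lambda1 T \<alpha> \<eta> a"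
  shows "\<exists>u1 u2. positive_solution T \<eta> \<alpha> a f u1 \<and> positive_solution T \<eta> \<alpha> a f u2
           \<and> 0 < supnorm T u1 \<and> supnorm T u1 < \<rho>2 \<and> \<rho>2 < supnorm T u2"
proof -
  interpret nonlocal_bvp T \<eta> \<alpha> a f
    using T eta alpha f_cont f_nonneg a_cont a_nonneg by unfold_locales (auto simp: field_simps)
  have pos: "0 < second_primitive a T" and below: "\<alpha>1 < Lambda1 T \<alpha> \<eta> a" "\<beta>2 < Lambda1 T \<alpha> \<eta> a"
    using less_Lambda1_of_theta hyp_b(2,3) hyp_c(2,3) by blast+
  obtain b where b: "0 < b" "\<And>r. 0 < r \<Longrightarrow> r < b \<Longrightarrow> subcritical r"
    using eventually_subcritical_at_right_0[OF hyp_b(1) below(1) pos]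
    unfolding eventually_at_right_field by auto
  define r where "r = min b \<rho>2 / 2"
  have r: "0 < r" "r < \<rho>2" "subcritical r"
    using b hyp_a(1) by (auto simp: r_def)
  obtain N where N: "\<And>R. N \<le> R \<Longrightarrow> subcritical R"
    using eventually_subcritical_at_top[OF hyp_c(1) below(2) pos]
    unfolding eventually_at_top_linorder by auto
  define R where "R = max N (\<rho>2 + 1)"
  have R: "\<rho>2 < R" "subcritical R"
    using N by (auto simp: R_def)
  have \<rho>2: "supercritical \<rho>2" by (rule supercritical_of_lower_bound[OF pos hyp_a])
  obtain u1 c1 where u1: "r < c1" "c1 < \<rho>2" "integral_solution u1 c1"
    by (rule integral_solution_between[of r \<rho>2]) (use r \<rho>2 in auto)
  obtain u2 c2 where u2: "\<rho>2 < c2" "c2 < R" "integral_solution u2 c2"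
    by (rule integral_solution_between[of \<rho>2 R]) (use R \<rho>2 in auto)
  have "positive_solution T \<eta> \<alpha> a f u1" "supnorm T u1 = c1"
    using u1 r by (auto intro!: positive_solution_of_integral_solution supnorm_integral_solution)
  moreover have "positive_solution T \<eta> \<alpha> a f u2" "supnorm T u2 = c2"
    using u2 hyp_a(1) by (auto intro!: positive_solution_of_integral_solution supnorm_integral_solution)
  ultimately show ?thesis using u1 u2 r by (intro exI[of _ u1] exI[of _ u2]) auto
qed

end
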